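(* Let $n\ge 1$ and $d\ge 1$ be integers, let $\mathcal{X}\subset\mathbb{R}^d$ be compact and convex, let $\mathbf{x}_0\in\mathcal{X}$, let $w_0,w_1,\dots,w_n\in\mathbb{R}$, and let $\mathbf{t}_1,\dots,\mathbf{t}_n\in\mathbb{R}^d$. Consider the $n$-player game $G$ in which player $i\in[n]$ chooses $\mathbf{x}_i\in\mathcal{X}$ and incurs the loss $\ell_i(\mathbf{x}_1,\dots,\mathbf{x}_n)=\|w_0\mathbf{x}_0+\sum_{j=1}^n w_j\mathbf{x}_j-\mathbf{t}_i\|_2^2$. Then $G$ has either exactly one pure Nash equilibrium or infinitely many pure Nash equilibria.
   Context: A pure Nash equilibrium of $G$ is a profile $\mathbf{x}=(\mathbf{x}_1,\dots,\mathbf{x}_n)\in\mathcal{X}^n$ such that $\ell_i(\mathbf{x}_i,\mathbf{x}_{-i})\le\ell_i(\mathbf{y},\mathbf{x}_{-i})$ for all $\mathbf{y}\in\mathcal{X}$ and all $i\in[n]$, where $(\mathbf{y},\mathbf{x}_{-i})$ denotes the profile with player $i$'s action replaced by $\mathbf{y}$. *)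

theory Defs
  imports "HOL-Analysis.Analysis" "HOL-Library.FuncSet"
begin

definition pure_nash_equilibria ::
  "nat \<Rightarrow> 'a set \<Rightarrow> (nat \<Rightarrow> (nat \<Rightarrow> 'a) \<Rightarrow> real) \<Rightarrow> (nat \<Rightarrow> 'a) set" where
  "pure_nash_equilibria n X loss =
     {x \<in> Pi\<^sub>E {1..n} (\<lambda>_. X).
        \<forall>i\<in>{1..n}. \<forall>y\<in>X. loss i x \<le> loss i (x(i := y))}"

end

theory Submission
  imports Defs
begin

(*
  Writing S(x) = w 0 x0 + \<Sum>j w j x j, the game is an exact potential game with the convex
  quadratic potential \<Phi>(x) = |S(x)|^2 - 2 \<Sum>j w j <x j, t j>: a unilateral deviation of
  player i changes the loss of i and \<Phi> by the same amount. Expanding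
    \<Phi>(x + h) = \<Phi>(x) + 2 \<Sum>j w j <S(x) - t j, h j> + |\<Sum>j w j h j|^2,
  the first-order condition of each player's convex problem makes every linear term
  nonnegative at an equilibrium, so the equilibria are exactly the minimizers of \<Phi> over
  the compact convex set of profiles. Minimizers exist by compactness, and by convexity
  of \<Phi> they contain the whole segment between any two of them.
*)

definition aggregate :: "nat \<Rightarrow> (nat \<Rightarrow> real) \<Rightarrow> 'a::real_vector \<Rightarrow> (nat \<Rightarrow> 'a) \<Rightarrow> 'a" where
  "aggregate n w x0 x = w 0 *\<^sub>R x0 + (\<Sum>j=1..n. w j *\<^sub>R x j)"

definition potential ::
  "nat \<Rightarrow> (nat \<Rightarrow> real) \<Rightarrow> 'a::real_inner \<Rightarrow> (nat \<Rightarrow> 'a) \<Rightarrow> (nat \<Rightarrow> 'a) \<Rightarrow> real" where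
  "potential n w x0 t x = (norm (aggregate n w x0 x))\<^sup>2 - 2 * (\<Sum>j=1..n. w j * (x j \<bullet> t j))"

lemma power2_norm_add:
  fixes x y :: "'a::real_inner"
  shows "(norm (x + y))\<^sup>2 = (norm x)\<^sup>2 + 2 * (x \<bullet> y) + (norm y)\<^sup>2"
  by (simp add: power2_norm_eq_inner inner_add_left inner_add_right inner_commute)

lemma aggregate_cong:
  "(\<And>j. j \<in> {1..n} \<Longrightarrow> x j = y j) \<Longrightarrow> aggregate n w x0 x = aggregate n w x0 y"
  unfolding aggregate_def by simp

lemma potential_cong:
  "(\<And>j. j \<in> {1..n} \<Longrightarrow> x j = y j) \<Longrightarrow> potential n w x0 t x = potential n w x0 t y"
  unfolding potential_def using aggregate_cong[of n x y] by simp

lemma aggregate_add: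
  "aggregate n w x0 (\<lambda>j. x j + h j) = aggregate n w x0 x + (\<Sum>j=1..n. w j *\<^sub>R h j)"
  unfolding aggregate_def by (simp add: sum.distrib algebra_simps)

lemma aggregate_update:
  assumes "i \<in> {1..n}"
  shows "aggregate n w x0 (x(i := y)) = aggregate n w x0 x + w i *\<^sub>R (y - x i)"
proof -
  have "aggregate n w x0 (x(i := y)) = aggregate n w x0 (\<lambda>j. x j + (if j = i then y - x i else 0))"
    by (rule aggregate_cong) simp
  also have "\<dots> = aggregate n w x0 x + w i *\<^sub>R (y - x i)"
    unfolding aggregate_add using assms by (simp add: if_distrib cong: if_cong)
  finally show ?thesis .
qed

lemma potential_add:
  "potential n w x0 t (\<lambda>j. x j + h j) = potential n w x0 t x
     + 2 * (\<Sum>j=1..n. w j * ((aggregate n w x0 x - t j) \<bullet> h j))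
     + (norm (\<Sum>j=1..n. w j *\<^sub>R h j))\<^sup>2"
proof -
  define A where "A = aggregate n w x0 x"
  define H where "H = (\<Sum>j=1..n. w j *\<^sub>R h j)"
  have "A \<bullet> H = (\<Sum>j=1..n. w j * (A \<bullet> h j))"
    unfolding H_def by (simp add: inner_sum_right)
  then show ?thesis
    unfolding potential_def aggregate_add A_def[symmetric] H_def[symmetric] power2_norm_add
    by (simp add: inner_commute algebra_simps sum.distrib sum_subtractf sum_distrib_left)
qed

lemma potential_update:
  assumes "i \<in> {1..n}"
  shows "potential n w x0 t (x(i := y)) - potential n w x0 t x
       = (norm (aggregate n w x0 (x(i := y)) - t i))\<^sup>2 - (norm (aggregate n w x0 x - t i))\<^sup>2"
proof -
  define u where "u = aggregate n w x0 x - t i"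
  have "potential n w x0 t (x(i := y))
      = potential n w x0 t (\<lambda>j. x j + (if j = i then y - x i else 0))"
    by (rule potential_cong) simp
  also have "\<dots> = potential n w x0 t x + 2 * w i * (u \<bullet> (y - x i)) + (norm (w i *\<^sub>R (y - x i)))\<^sup>2"
    unfolding potential_add using assms by (simp add: u_def if_distrib cong: if_cong)
  also have "\<dots> = potential n w x0 t x + (norm (u + w i *\<^sub>R (y - x i)))\<^sup>2 - (norm u)\<^sup>2"
    unfolding power2_norm_add by simp
  finally show ?thesis
    unfolding aggregate_update[OF assms] u_def by (simp add: algebra_simps)
qed

lemma nonneg_if_nonneg_add_small_multiples:
  fixes b q :: real
  assumes "\<And>s. 0 < s \<Longrightarrow> s \<le> 1 \<Longrightarrow> 0 \<le> b + s * q"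
  shows "0 \<le> b"
proof (rule ccontr)
  assume "\<not> 0 \<le> b"
  moreover have "0 \<le> b + q" using assms[of 1] by simp
  ultimately have q: "0 < q" by simp
  define s where "s = min 1 (- b / (2 * q))"
  have "0 < s" "s \<le> 1" using q \<open>\<not> 0 \<le> b\<close> by (auto simp: s_def divide_neg_pos)
  moreover have "s * q \<le> - b / 2" using q by (simp add: s_def min_def field_simps)
  ultimately show False using assms[of s] \<open>\<not> 0 \<le> b\<close> by simp
qed

lemma variational_inequality_sq_norm:
  fixes u a :: "'a::real_inner"
  assumes "convex X" "a \<in> X" "y \<in> X"
    and min: "\<And>z. z \<in> X \<Longrightarrow> (norm u)\<^sup>2 \<le> (norm (u + c *\<^sub>R (z - a)))\<^sup>2"
  shows "0 \<le> c * (u \<bullet> (y - a))"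
proof -
  define v where "v = c *\<^sub>R (y - a)"
  have "0 \<le> 2 * (u \<bullet> v) + s * (norm v)\<^sup>2" if "0 < s" "s \<le> 1" for s
  proof -
    have "a + s *\<^sub>R (y - a) \<in> X"
      using convexD_alt[OF assms(1-3), of s] that by (simp add: algebra_simps)
    from min[OF this] have "(norm u)\<^sup>2 \<le> (norm (u + s *\<^sub>R v))\<^sup>2"
      by (simp add: v_def mult.commute)
    also have "\<dots> = (norm u)\<^sup>2 + s * (2 * (u \<bullet> v) + s * (norm v)\<^sup>2)"
      unfolding power2_norm_add by (simp add: algebra_simps power2_eq_square)
    finally show ?thesis using that by (simp add: zero_le_mult_iff)
  qed
  from nonneg_if_nonneg_add_small_multiples[OF this] show ?thesis by (simp add: v_def)
qed

definition potential_minimizers ::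
  "nat \<Rightarrow> 'a set \<Rightarrow> (nat \<Rightarrow> real) \<Rightarrow> 'a::real_inner \<Rightarrow> (nat \<Rightarrow> 'a) \<Rightarrow> (nat \<Rightarrow> 'a) set" where
  "potential_minimizers n X w x0 t =
     {x \<in> Pi\<^sub>E {1..n} (\<lambda>_. X). \<forall>z \<in> Pi\<^sub>E {1..n} (\<lambda>_. X). potential n w x0 t x \<le> potential n w x0 t z}"

lemma potential_le_if_Nash:
  fixes x0 :: "'a::real_inner"
  assumes "convex X"
    and x: "x \<in> pure_nash_equilibria n X (\<lambda>i x. (norm (aggregate n w x0 x - t i))\<^sup>2)"
    and z: "z \<in> Pi\<^sub>E {1..n} (\<lambda>_. X)"
  shows "potential n w x0 t x \<le> potential n w x0 t z"
proof -
  have xP: "x \<in> Pi\<^sub>E {1..n} (\<lambda>_. X)"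
    using x by (simp add: pure_nash_equilibria_def)
  have "0 \<le> w j * ((aggregate n w x0 x - t j) \<bullet> (z j - x j))" if j: "j \<in> {1..n}" for j
  proof (rule variational_inequality_sq_norm[OF \<open>convex X\<close>])
    show "x j \<in> X" "z j \<in> X" using xP z j by auto
    fix y assume "y \<in> X"
    with x j have "(norm (aggregate n w x0 x - t j))\<^sup>2 \<le> (norm (aggregate n w x0 (x(j := y)) - t j))\<^sup>2"
      by (simp add: pure_nash_equilibria_def)
    then show "(norm (aggregate n w x0 x - t j))\<^sup>2
        \<le> (norm (aggregate n w x0 x - t j + w j *\<^sub>R (y - x j)))\<^sup>2"
      by (simp add: aggregate_update[OF j] algebra_simps)
  qed
  then have "0 \<le> (\<Sum>j=1..n. w j * ((aggregate n w x0 x - t j) \<bullet> (z j - x j)))"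
    by (intro sum_nonneg) auto
  moreover have "potential n w x0 t z = potential n w x0 t (\<lambda>j. x j + (z j - x j))"
    by simp
  ultimately show ?thesis
    unfolding potential_add by simp
qed

lemma Nash_if_potential_minimal:
  assumes x: "x \<in> Pi\<^sub>E {1..n} (\<lambda>_. X)"
    and min: "\<And>z. z \<in> Pi\<^sub>E {1..n} (\<lambda>_. X) \<Longrightarrow> potential n w x0 t x \<le> potential n w x0 t z"
  shows "x \<in> pure_nash_equilibria n X (\<lambda>i x. (norm (aggregate n w x0 x - t i))\<^sup>2)"
proof -
  have "(norm (aggregate n w x0 x - t i))\<^sup>2 \<le> (norm (aggregate n w x0 (x(i := y)) - t i))\<^sup>2"
    if "i \<in> {1..n}" "y \<in> X" for i y
  proof -
    have "x(i := y) \<in> Pi\<^sub>E {1..n} (\<lambda>_. X)" using x that by (auto simp: PiE_iff extensional_def)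
    from min[OF this] potential_update[OF that(1), of w x0 t x y] show ?thesis by linarith
  qed
  with x show ?thesis by (simp add: pure_nash_equilibria_def)
qed

lemma pure_nash_equilibria_eq_potential_minimizers:
  fixes x0 :: "'a::real_inner"
  assumes "convex X"
  shows "pure_nash_equilibria n X (\<lambda>i x. (norm (aggregate n w x0 x - t i))\<^sup>2)
       = potential_minimizers n X w x0 t"
proof (intro set_eqI iffI)
  fix x assume NE: "x \<in> pure_nash_equilibria n X (\<lambda>i x. (norm (aggregate n w x0 x - t i))\<^sup>2)"
  then have "x \<in> Pi\<^sub>E {1..n} (\<lambda>_. X)" by (simp add: pure_nash_equilibria_def)
  with potential_le_if_Nash[OF assms NE] show "x \<in> potential_minimizers n X w x0 t"
    by (simp add: potential_minimizers_def)
next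
  fix x assume "x \<in> potential_minimizers n X w x0 t"
  then show "x \<in> pure_nash_equilibria n X (\<lambda>i x. (norm (aggregate n w x0 x - t i))\<^sup>2)"
    by (intro Nash_if_potential_minimal) (auto simp: potential_minimizers_def)
qed

lemma potential_segment_le:
  assumes "0 \<le> s" "s \<le> 1"
  shows "potential n w x0 t (\<lambda>j. x j + s *\<^sub>R (z j - x j))
       \<le> (1 - s) * potential n w x0 t x + s * potential n w x0 t z"
proof -
  define L where "L = (\<Sum>j=1..n. w j * ((aggregate n w x0 x - t j) \<bullet> (z j - x j)))"
  define Q where "Q = (norm (\<Sum>j=1..n. w j *\<^sub>R (z j - x j)))\<^sup>2"
  have "(\<Sum>j=1..n. w j *\<^sub>R (s *\<^sub>R (z j - x j))) = s *\<^sub>R (\<Sum>j=1..n. w j *\<^sub>R (z j - x j))"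
    by (simp add: scaleR_sum_right mult.commute)
  then have "potential n w x0 t (\<lambda>j. x j + s *\<^sub>R (z j - x j)) = potential n w x0 t x + s * 2 * L + s\<^sup>2 * Q"
    unfolding potential_add L_def Q_def
    by (simp add: sum_distrib_left algebra_simps)
  moreover have "potential n w x0 t z = potential n w x0 t x + 2 * L + Q"
    using potential_add[of n w x0 t x "\<lambda>j. z j - x j"] by (simp add: L_def Q_def)
  moreover have "s\<^sup>2 * Q \<le> s * Q"
    using assms by (intro mult_right_mono) (auto simp: Q_def power2_eq_square mult_left_le)
  ultimately show ?thesis by (simp add: algebra_simps)
qed

lemma compact_PiE_const:
  assumes "compact X"
  shows "compact (Pi\<^sub>E I (\<lambda>_. X))"
proof -
  define S where "S = (\<lambda>j. if j \<in> I then X else {undefined})"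
  have "Pi\<^sub>E I (\<lambda>_. X) = Pi\<^sub>E UNIV S"
    unfolding S_def PiE_def extensional_def Pi_def by auto
  moreover have "compactin (product_topology (\<lambda>_. euclidean) UNIV) (Pi\<^sub>E UNIV S)"
    unfolding compactin_PiE using assms by (auto simp: S_def)
  ultimately show ?thesis
    by (simp add: euclidean_product_topology)
qed

lemma continuous_on_potential: "continuous_on UNIV (potential n w x0 t)"
  unfolding potential_def aggregate_def
  by (intro continuous_intros continuous_on_product_coordinates)

lemma segment_profile_in_PiE:
  assumes "convex X" "x \<in> Pi\<^sub>E I (\<lambda>_. X)" "z \<in> Pi\<^sub>E I (\<lambda>_. X)" "0 \<le> s" "s \<le> 1"
  shows "restrict (\<lambda>j. x j + s *\<^sub>R (z j - x j)) I \<in> Pi\<^sub>E I (\<lambda>_. X)"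
proof -
  have "x j + s *\<^sub>R (z j - x j) \<in> X" if "j \<in> I" for j
    using convexD_alt[OF assms(1), of "x j" "z j" s] assms that by (auto simp: algebra_simps)
  then show ?thesis by simp
qed

lemma infinite_segment_profiles:
  fixes x z :: "'i \<Rightarrow> 'a::real_vector"
  assumes "k \<in> I" "x k \<noteq> z k"
  shows "infinite ((\<lambda>s. restrict (\<lambda>j. x j + s *\<^sub>R (z j - x j)) I) ` {0..1})"
proof -
  have "inj_on (\<lambda>s. restrict (\<lambda>j. x j + s *\<^sub>R (z j - x j)) I) {0..1}"
  proof (rule inj_onI)
    fix a b :: real
    assume eq: "restrict (\<lambda>j. x j + a *\<^sub>R (z j - x j)) I = restrict (\<lambda>j. x j + b *\<^sub>R (z j - x j)) I"
    have "x k + a *\<^sub>R (z k - x k) = x k + b *\<^sub>R (z k - x k)"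
      using fun_cong[OF eq, of k] \<open>k \<in> I\<close> by simp
    then have "(a - b) *\<^sub>R (z k - x k) = 0" by (simp add: algebra_simps)
    with \<open>x k \<noteq> z k\<close> show "a = b" by simp
  qed
  then show ?thesis by (simp add: finite_image_iff)
qed

lemma potential_minimizers_infinite:
  fixes x0 :: "'a::real_inner"
  assumes "convex X" "x \<in> potential_minimizers n X w x0 t" "z \<in> potential_minimizers n X w x0 t"
    and "x \<noteq> z"
  shows "infinite (potential_minimizers n X w x0 t)"
proof -
  let ?P = "Pi\<^sub>E {1..n} (\<lambda>_. X)" and ?M = "potential_minimizers n X w x0 t"
  let ?p = "\<lambda>s. restrict (\<lambda>j. x j + s *\<^sub>R (z j - x j)) {1..n}"
  have xz: "x \<in> ?P" "z \<in> ?P"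
    and x_min: "\<forall>y \<in> ?P. potential n w x0 t x \<le> potential n w x0 t y"
    and z_min: "\<forall>y \<in> ?P. potential n w x0 t z \<le> potential n w x0 t y"
    using assms(2,3) by (simp_all add: potential_minimizers_def)
  then have same: "potential n w x0 t z = potential n w x0 t x"
    by (simp add: order_antisym)
  obtain k where "k \<in> {1..n}" "x k \<noteq> z k"
    using PiE_ext[OF xz] \<open>x \<noteq> z\<close> by blast
  have "?p s \<in> ?M" if "s \<in> {0..1}" for s
  proof -
    have "potential n w x0 t (?p s) = potential n w x0 t (\<lambda>j. x j + s *\<^sub>R (z j - x j))"
      by (rule potential_cong) simp
    also have "\<dots> \<le> (1 - s) * potential n w x0 t x + s * potential n w x0 t z"
      using that by (simp add: potential_segment_le)
    also have "\<dots> = potential n w x0 t x"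
      by (simp add: same algebra_simps)
    finally have "\<forall>y \<in> ?P. potential n w x0 t (?p s) \<le> potential n w x0 t y"
      using x_min by fastforce
    moreover have "?p s \<in> ?P"
      using segment_profile_in_PiE[OF \<open>convex X\<close> xz] that by simp
    ultimately show ?thesis by (simp add: potential_minimizers_def)
  qed
  then have "?p ` {0..1} \<subseteq> ?M" by blast
  from infinite_super[OF this infinite_segment_profiles] \<open>k \<in> {1..n}\<close> \<open>x k \<noteq> z k\<close>
  show ?thesis by blast
qed

lemma card_eq_1_or_infinite:
  assumes "S \<noteq> {}" and "\<And>a b. a \<in> S \<Longrightarrow> b \<in> S \<Longrightarrow> a \<noteq> b \<Longrightarrow> infinite S"
  shows "card S = 1 \<or> infinite S"
proof (rule disjCI)
  assume "\<not> infinite S"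
  obtain a where "a \<in> S" using \<open>S \<noteq> {}\<close> by blast
  with \<open>\<not> infinite S\<close> assms(2) have "S = {a}" by blast
  then show "card S = 1" by simp
qed

theorem corollary1:
  fixes n :: nat and X :: "(real ^ 'd) set" and x0 :: "real ^ 'd"
    and w :: "nat \<Rightarrow> real" and t :: "nat \<Rightarrow> real ^ 'd"
  assumes "n \<ge> 1"
    and "compact X" and "convex X" and "x0 \<in> X"
  shows "card (pure_nash_equilibria n X
            (\<lambda>i x. (norm (w 0 *\<^sub>R x0 + (\<Sum>j=1..n. w j *\<^sub>R x j) - t i))\<^sup>2)) = 1
       \<or> infinite (pure_nash_equilibria n X
            (\<lambda>i x. (norm (w 0 *\<^sub>R x0 + (\<Sum>j=1..n. w j *\<^sub>R x j) - t i))\<^sup>2))"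
proof -
  let ?P = "Pi\<^sub>E {1..n} (\<lambda>_. X)"
  let ?M = "potential_minimizers n X w x0 t"
  have "?M \<noteq> {}"
  proof -
    have "?P \<noteq> {}" using \<open>x0 \<in> X\<close> by (auto simp: PiE_eq_empty_iff)
    from continuous_attains_inf[OF compact_PiE_const[OF \<open>compact X\<close>] this
        continuous_on_subset[OF continuous_on_potential[of n w x0 t] subset_UNIV]]
    show ?thesis by (auto simp: potential_minimizers_def)
  qed
  moreover have "infinite ?M" if "a \<in> ?M" "b \<in> ?M" "a \<noteq> b" for a b
    using potential_minimizers_infinite[OF \<open>convex X\<close> that] .
  ultimately have "card ?M = 1 \<or> infinite ?M"
    by (rule card_eq_1_or_infinite)
  moreover have "pure_nash_equilibria n X
      (\<lambda>i x. (norm (w 0 *\<^sub>R x0 + (\<Sum>j=1..n. w j *\<^sub>R x j) - t i))\<^sup>2) = ?M"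
    using pure_nash_equilibria_eq_potential_minimizers[OF \<open>convex X\<close>, of n w x0 t]
    unfolding aggregate_def .
  ultimately show ?thesis by simp
qed

end
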